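(* Let $K$ be a field of characteristic zero, let $d\geq 2$, and let $K\langle X_d\rangle=K\langle x_1,\ldots,x_d\rangle$ be the free associative unital algebra of rank $d$ over $K$. Let $C_d$ be the cyclic group of order $d$ generated by the linear map $\rho$ with $\rho(x_1)=x_2,\ \rho(x_2)=x_3,\ \ldots,\ \rho(x_{d-1})=x_d,\ \rho(x_d)=x_1$, acting on $K\langle X_d\rangle$ by algebra automorphisms, and let $K\langle X_d\rangle^{C_d}=\{f\in K\langle X_d\rangle : \rho(f)=f\}$ be the algebra of invariants. Then: (i) The Hilbert series of $K\langle X_d\rangle^{C_d}$ is \[ H\big(K\langle X_d\rangle^{C_d},t\big)=\frac{1-(d-1)t}{1-dt}, \] and $\dim\big((K\langle X_d\rangle^{C_d})^{(n)}\big)=d^{n-1}$ for all $n\geq 1$. (ii) The generating function of a set of homogeneous free generators of the (free) algebra $K\langle X_d\rangle^{C_d}$ is \[ g(t)=\frac{t}{1-(d-1)t}, \] i.e. for each $n\geq 1$ a system of homogeneous free generators has exactly $(d-1)^{n-1}$ elements of degree $n$.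
   Context: $K\langle X_d\rangle$ is graded by total degree in $x_1,\ldots,x_d$; $(K\langle X_d\rangle^{C_d})^{(n)}$ denotes the homogeneous component of degree $n$ of the invariant algebra. The Hilbert series of a graded subalgebra $A$ is $H(A,t)=\sum_{n\geq 0}\dim A^{(n)}t^n$. The algebra of invariants $K\langle X_d\rangle^{C_d}$ is a free associative algebra (on a set of homogeneous generators), and the generating function of a set $Z$ of homogeneous free generators is $\sum_{n\geq1}|Z_n|t^n$ where $Z_n$ is the set of generators of degree $n$. *)

theory Defs
  imports Main "HOL-Library.Function_Algebras" "HOL-Computational_Algebra.Formal_Power_Series"
begin

text \<open>The free associative unital algebra K<x_0,...,x_(d-1)> is modelled as the set of
  finitely supported functions from words (lists of letter indices < d) to K;
  the letter i stands for the variable x_(i+1).\<close>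

definition fa_scale :: "'k::field \<Rightarrow> (nat list \<Rightarrow> 'k) \<Rightarrow> (nat list \<Rightarrow> 'k)" where
  "fa_scale c f = (\<lambda>w. c * f w)"

definition free_alg :: "nat \<Rightarrow> (nat list \<Rightarrow> 'k::field) set" where
  "free_alg d = {f. finite {w. f w \<noteq> 0} \<and> (\<forall>w. f w \<noteq> 0 \<longrightarrow> set w \<subseteq> {..<d})}"

definition fa_one :: "nat list \<Rightarrow> 'k::field" where
  "fa_one w = (if w = [] then 1 else 0)"

definition fa_mult :: "(nat list \<Rightarrow> 'k::field) \<Rightarrow> (nat list \<Rightarrow> 'k) \<Rightarrow> (nat list \<Rightarrow> 'k)" where
  "fa_mult f g = (\<lambda>w. \<Sum>i\<le>length w. f (take i w) * g (drop i w))"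

text \<open>The automorphism rho: x_i \<mapsto> x_(i+1) (indices mod d). It maps the monomial w to
  the monomial  map (\<lambda>i. (i+1) mod d) w, so the coefficient of w in rho(f) is the
  coefficient of  map (\<lambda>i. (i + d - 1) mod d) w  in f.\<close>

definition fa_rho :: "nat \<Rightarrow> (nat list \<Rightarrow> 'k::field) \<Rightarrow> (nat list \<Rightarrow> 'k)" where
  "fa_rho d f = (\<lambda>w. if set w \<subseteq> {..<d} then f (map (\<lambda>i. (i + d - 1) mod d) w) else 0)"

definition invariants :: "nat \<Rightarrow> (nat list \<Rightarrow> 'k::field) set" where
  "invariants d = {f \<in> free_alg d. fa_rho d f = f}"

definition homogeneous :: "nat \<Rightarrow> (nat list \<Rightarrow> 'k::field) \<Rightarrow> bool" where
  "homogeneous n f \<longleftrightarrow> (\<forall>w. f w \<noteq> 0 \<longrightarrow> length w = n)"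

definition inv_component :: "nat \<Rightarrow> nat \<Rightarrow> (nat list \<Rightarrow> 'k::field) set" where
  "inv_component d n = {f \<in> invariants d. homogeneous n f}"

definition inv_dim :: "'k::field itself \<Rightarrow> nat \<Rightarrow> nat \<Rightarrow> nat" where
  "inv_dim _ d n = vector_space.dim (fa_scale :: 'k \<Rightarrow> _) (inv_component d n :: (nat list \<Rightarrow> 'k) set)"

definition hilbert_series :: "'k::field itself \<Rightarrow> nat \<Rightarrow> rat fps" where
  "hilbert_series K d = Abs_fps (\<lambda>n. of_nat (inv_dim K d n))"

definition fa_prod :: "(nat list \<Rightarrow> 'k::field) list \<Rightarrow> (nat list \<Rightarrow> 'k)" where
  "fa_prod zs = foldr fa_mult zs fa_one"

definition free_homog_generators :: "nat \<Rightarrow> (nat list \<Rightarrow> 'k::field) set \<Rightarrow> bool" where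
  "free_homog_generators d Z \<longleftrightarrow>
     Z \<subseteq> invariants d \<and>
     (\<forall>z\<in>Z. \<exists>n\<ge>1. homogeneous n z \<and> z \<noteq> (\<lambda>_. 0)) \<and>
     inj_on fa_prod (lists Z) \<and>
     \<not> module.dependent (fa_scale :: 'k \<Rightarrow> _) (fa_prod ` lists Z) \<and>
     module.span (fa_scale :: 'k \<Rightarrow> _) (fa_prod ` lists Z) = invariants d"

end

theory Submission
  imports Defs "HOL-Library.List_Lexorder"
begin

(*
  The monomials of degree n are the words of length n, and rho permutes them by adding 1 to
  every letter modulo d.  An invariant is constant on the orbits, so the orbit sums form a basis
  of the invariants of degree n; for n >= 1 every orbit contains exactly one word starting with
  x_1, hence this dimension is d^(n-1), which gives the Hilbert series.

  In the lexicographic order, the least word in the support of a product of homogeneous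
  elements is the concatenation of the least words of the factors.  Hence the products of
  orbit sums of the words x_1 u, with u a word in x_2, ..., x_d, are linearly independent.
  Every word starting with x_1 factors uniquely into such words, so in each degree n >= 1 there
  are d^(n-1) of these products, and by dimension they span the invariants of degree n.

  For an arbitrary set of homogeneous free generators, the products of total degree m form a
  basis of the invariants of degree m.  Counting them by their first factor, the number z_j of
  generators of degree j satisfies d^(m-1) = z_m + sum_{j<m} z_j d^(m-j-1), which forces
  z_j = (d-1)^(j-1).
*)

context vector_space
begin

text \<open>The library's \<open>card_ge_dim_independent\<close> assumes a finite-dimensional ambient
  space; here only \<open>V\<close> needs to be finite-dimensional.\<close>

lemma subset_span_if_card_ge_dim:
  assumes W: "finite W" "V \<subseteq> span W" and B: "B \<subseteq> V" "independent B" "dim V \<le> card B"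
  shows "V \<subseteq> span B"
proof
  fix a
  assume a: "a \<in> V"
  obtain A where A: "A \<subseteq> V" "independent A" "V \<subseteq> span A" "card A = dim V"
    by (rule basis_exists)
  have "finite A"
    using independent_span_bound[OF W(1) A(2)] A(1) W(2) by auto
  show "a \<in> span B"
  proof (rule ccontr)
    assume "a \<notin> span B"
    then have "a \<notin> B"
      by (meson span_base)
    have "insert a B \<subseteq> span A"
      using a B(1) A(3) by auto
    then have "finite (insert a B) \<and> card (insert a B) \<le> card A"
      by (rule independent_span_bound[OF \<open>finite A\<close> independent_insertI[OF \<open>a \<notin> span B\<close> B(2)]])
    then show False
      using \<open>a \<notin> B\<close> A(4) B(3) by auto
  qed
qed

end

lemma Abs_fps_geometric_tail:
  fixes c :: "'a::field"
  shows "Abs_fps (\<lambda>n. if n = 0 then 1 else c ^ (n - 1))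
    = (1 - fps_const (c - 1) * fps_X) / (1 - fps_const c * fps_X)"
proof -
  define A where "A = Abs_fps (\<lambda>n. if n = 0 then 1 else c ^ (n - 1))"
  have times_eq: "A * (1 - fps_const c * fps_X) = 1 - fps_const (c - 1) * fps_X"
  proof (rule fps_ext)
    fix n
    have expand: "A * (1 - fps_const c * fps_X) = A - fps_const c * (fps_X * A)"
      by (simp add: algebra_simps)
    consider "n = 0" | "n = 1" | k where "n = Suc (Suc k)"
      by (metis One_nat_def not0_implies_Suc)
    then show "fps_nth (A * (1 - fps_const c * fps_X)) n = fps_nth (1 - fps_const (c - 1) * fps_X) n"
      unfolding expand by cases (simp_all add: A_def)
  qed
  have "fps_nth (1 - fps_const c * fps_X) 0 \<noteq> 0"
    by simp
  then have nonzero: "1 - fps_const c * fps_X \<noteq> 0"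
    by force
  have "A = A * (1 - fps_const c * fps_X) / (1 - fps_const c * fps_X)"
    by (simp add: fps_divide_times_eq[OF nonzero])
  also have "\<dots> = (1 - fps_const (c - 1) * fps_X) / (1 - fps_const c * fps_X)"
    by (simp add: times_eq)
  finally show ?thesis
    by (simp add: A_def)
qed

lemma append_le_append_same_length:
  fixes a x :: "'a::linorder list"
  assumes "length a = length x" "a \<le> x" "b \<le> y"
  shows "a @ b \<le> x @ y"
  using assms
proof (induction a x rule: list_induct2)
  case (Cons p a q x)
  then consider "p < q" | "p = q" "a \<le> x"
    by auto
  then show ?case
    using Cons by cases simp_all
qed simp

lemma takeWhile_nonzero_append:
  assumes "0 \<notin> set t" "r = [] \<or> hd r = 0"
  shows "takeWhile (\<lambda>x. x \<noteq> (0::nat)) (t @ r) = t"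
proof -
  have "takeWhile (\<lambda>x. x \<noteq> (0::nat)) (t @ r) = t @ takeWhile (\<lambda>x. x \<noteq> 0) r"
    using assms(1) by (intro takeWhile_append2) (metis gr0I)
  moreover have "takeWhile (\<lambda>x. x \<noteq> (0::nat)) r = []"
    using assms(2) by (simp add: takeWhile_eq_Nil_iff)
  ultimately show ?thesis
    by simp
qed

lemma power_Suc_eq_convolution_sum:
  "(\<Sum>j=1..k. e ^ (j - 1) * Suc e ^ (k - j)) + e ^ k = Suc e ^ k"
proof (induction k)
  case (Suc k)
  have "(\<Sum>j=1..k. e ^ (j - 1) * Suc e ^ (Suc k - j)) = Suc e * (\<Sum>j=1..k. e ^ (j - 1) * Suc e ^ (k - j))"
    unfolding sum_distrib_left by (rule sum.cong) (auto simp: Suc_diff_le algebra_simps)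
  then have "(\<Sum>j=1..Suc k. e ^ (j - 1) * Suc e ^ (Suc k - j))
      = Suc e * (\<Sum>j=1..k. e ^ (j - 1) * Suc e ^ (k - j)) + e ^ k"
    by (simp add: sum.cl_ivl_Suc)
  also have "\<dots> + e ^ Suc k = Suc e * ((\<Sum>j=1..k. e ^ (j - 1) * Suc e ^ (k - j)) + e ^ k)"
    by (simp add: algebra_simps)
  finally show ?case
    using Suc.IH by simp
qed simp

section \<open>Lists of weighted letters\<close>

definition weight_class :: "'a set \<Rightarrow> ('a \<Rightarrow> nat) \<Rightarrow> nat \<Rightarrow> 'a set" where
  "weight_class Z wt n = {z \<in> Z. wt z = n}"

definition weighted_lists :: "'a set \<Rightarrow> ('a \<Rightarrow> nat) \<Rightarrow> nat \<Rightarrow> 'a list set" where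
  "weighted_lists Z wt m = {zs \<in> lists Z. sum_list (map wt zs) = m}"

lemma weighted_lists_0:
  assumes "\<And>z. z \<in> Z \<Longrightarrow> wt z \<ge> 1"
  shows "weighted_lists Z wt 0 = {[]}"
proof -
  have "zs = []" if "zs \<in> lists Z" "sum_list (map wt zs) = 0" for zs
    using that assms by (cases zs) fastforce+
  then show ?thesis
    by (auto simp: weighted_lists_def)
qed

lemma weighted_lists_Cons_decomposition:
  assumes pos: "\<And>z. z \<in> Z \<Longrightarrow> wt z \<ge> 1" and m: "m \<ge> 1"
  shows "weighted_lists Z wt m
    = (\<lambda>(z, zs). z # zs) ` (\<Union>j\<in>{1..m}. weight_class Z wt j \<times> weighted_lists Z wt (m - j))"
proof
  show "weighted_lists Z wt m
    \<subseteq> (\<lambda>(z, zs). z # zs) ` (\<Union>j\<in>{1..m}. weight_class Z wt j \<times> weighted_lists Z wt (m - j))"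
  proof
    fix zs
    assume zs: "zs \<in> weighted_lists Z wt m"
    then obtain z zs' where "zs = z # zs'"
      using m by (cases zs) (auto simp: weighted_lists_def)
    moreover have "z \<in> weight_class Z wt (wt z)" "wt z \<in> {1..m}"
      "zs' \<in> weighted_lists Z wt (m - wt z)"
      using zs pos[of z] \<open>zs = z # zs'\<close> by (auto simp: weighted_lists_def weight_class_def)
    ultimately show "zs \<in> (\<lambda>(z, zs). z # zs) `
        (\<Union>j\<in>{1..m}. weight_class Z wt j \<times> weighted_lists Z wt (m - j))"
      by blast
  qed
  show "(\<lambda>(z, zs). z # zs) ` (\<Union>j\<in>{1..m}. weight_class Z wt j \<times> weighted_lists Z wt (m - j))
    \<subseteq> weighted_lists Z wt m"
    by (auto simp: weighted_lists_def weight_class_def)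
qed

lemma card_weighted_lists_recurrence:
  assumes pos: "\<And>z. z \<in> Z \<Longrightarrow> wt z \<ge> 1" and m: "m \<ge> 1"
    and fin: "\<And>j. finite (weight_class Z wt j)" "\<And>j. finite (weighted_lists Z wt j)"
  shows "card (weighted_lists Z wt m)
    = (\<Sum>j=1..m. card (weight_class Z wt j) * card (weighted_lists Z wt (m - j)))"
proof -
  have "inj_on (\<lambda>(z, zs). z # zs) A" for A :: "('a \<times> 'a list) set"
    by (auto simp: inj_on_def)
  then have "card (weighted_lists Z wt m)
      = card (\<Union>j\<in>{1..m}. weight_class Z wt j \<times> weighted_lists Z wt (m - j))"
    by (simp add: weighted_lists_Cons_decomposition[OF pos m] card_image)
  also have "\<dots> = (\<Sum>j=1..m. card (weight_class Z wt j \<times> weighted_lists Z wt (m - j)))"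
    using fin by (intro card_UN_disjoint) (auto simp: weight_class_def)
  finally show ?thesis
    by (simp add: card_cartesian_product)
qed

lemma card_weight_class:
  assumes pos: "\<And>z. z \<in> Z \<Longrightarrow> wt z \<ge> 1" and d: "d \<ge> 1"
    and lists_card: "\<And>m. m \<ge> 1 \<Longrightarrow> card (weighted_lists Z wt m) = d ^ (m - 1)"
    and n: "n \<ge> 1"
  shows "finite (weight_class Z wt n) \<and> card (weight_class Z wt n) = (d - 1) ^ (n - 1)"
proof -
  have fin_lists: "finite (weighted_lists Z wt m)" for m
  proof (cases "m = 0")
    case False
    then have "card (weighted_lists Z wt m) \<noteq> 0"
      using lists_card d by simp
    then show ?thesis
      using card_ge_0_finite by blast
  qed (simp add: weighted_lists_0[OF pos])
  have fin_class: "finite (weight_class Z wt j)" for j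
  proof -
    have "(\<lambda>z. [z]) ` weight_class Z wt j \<subseteq> weighted_lists Z wt j"
      by (auto simp: weight_class_def weighted_lists_def)
    then show ?thesis
      by (rule finite_imageD[OF finite_subset[OF _ fin_lists]]) (simp add: inj_on_def)
  qed
  have "card (weight_class Z wt n) = (d - 1) ^ (n - 1)"
    using n
  proof (induction n rule: less_induct)
    case (less n)
    then obtain k where k: "n = Suc k"
      by (cases n) auto
    have "d ^ k = (\<Sum>j=1..Suc k. card (weight_class Z wt j) * card (weighted_lists Z wt (Suc k - j)))"
      using lists_card[of "Suc k"] card_weighted_lists_recurrence[OF pos _ fin_class fin_lists, of "Suc k"]
      by simp
    also have "\<dots> = (\<Sum>j=1..k. (d - 1) ^ (j - 1) * d ^ (k - j)) + card (weight_class Z wt (Suc k))"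
      using less.IH k lists_card by (simp add: sum.cl_ivl_Suc weighted_lists_0[OF pos] Suc_diff_le)
    finally have "d ^ k = (\<Sum>j=1..k. (d - 1) ^ (j - 1) * d ^ (k - j)) + card (weight_class Z wt (Suc k))" .
    moreover have "(\<Sum>j=1..k. (d - 1) ^ (j - 1) * d ^ (k - j)) + (d - 1) ^ k = d ^ k"
      using power_Suc_eq_convolution_sum[of "d - 1" k] d by simp
    ultimately show ?case
      using k by simp
  qed
  with fin_class show ?thesis
    by blast
qed

section \<open>The free algebra as a graded vector space\<close>

interpretation FA: vector_space "fa_scale :: 'k::field \<Rightarrow> (nat list \<Rightarrow> 'k) \<Rightarrow> _"
  by unfold_locales (auto simp: fa_scale_def fun_eq_iff algebra_simps)

lemma sum_fun_apply: "sum f S x = (\<Sum>i\<in>S. f i x)"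
  by (induction S rule: infinite_finite_induct) auto

lemma free_alg_iff:
  "f \<in> free_alg d \<longleftrightarrow> finite {w. f w \<noteq> 0} \<and> (\<forall>w. f w \<noteq> 0 \<longrightarrow> w \<in> lists {..<d})"
  by (auto simp: free_alg_def)

lemma fa_mult_nonzero_split:
  assumes "fa_mult f g w \<noteq> 0"
  obtains i where "f (take i w) \<noteq> 0" "g (drop i w) \<noteq> 0"
  using assms unfolding fa_mult_def by (metis (no_types, lifting) mult_zero_left mult_zero_right sum.neutral)

lemma fa_mult_homogeneous_apply:
  assumes "homogeneous m f"
  shows "fa_mult f g w = (if m \<le> length w then f (take m w) * g (drop m w) else 0)"
proof -
  have "fa_mult f g w = (\<Sum>i\<le>length w. if i = m then f (take m w) * g (drop m w) else 0)"
    unfolding fa_mult_def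
  proof (rule sum.cong)
    fix i
    assume "i \<in> {..length w}"
    then have "i \<noteq> m \<Longrightarrow> f (take i w) = 0"
      using assms unfolding homogeneous_def by fastforce
    then show "f (take i w) * g (drop i w) = (if i = m then f (take m w) * g (drop m w) else 0)"
      by auto
  qed simp
  then show ?thesis
    by simp
qed

lemma homogeneous_fa_one: "homogeneous 0 fa_one"
  by (simp add: homogeneous_def fa_one_def)

lemma homogeneous_fa_mult:
  assumes "homogeneous m f" "homogeneous n g"
  shows "homogeneous (m + n) (fa_mult f g)"
  unfolding homogeneous_def
proof (intro allI impI)
  fix w
  assume "fa_mult f g w \<noteq> 0"
  then obtain i where "f (take i w) \<noteq> 0" "g (drop i w) \<noteq> 0"
    by (rule fa_mult_nonzero_split)
  then have "length (take i w) = m" "length (drop i w) = n"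
    using assms unfolding homogeneous_def by blast+
  then show "length w = m + n"
    by (metis append_take_drop_id length_append)
qed

lemma homogeneous_fa_prod_map:
  "(\<And>x. x \<in> set xs \<Longrightarrow> homogeneous (deg x) (F x)) \<Longrightarrow>
    homogeneous (sum_list (map deg xs)) (fa_prod (map F xs))"
  by (induction xs) (auto simp: fa_prod_def homogeneous_fa_one homogeneous_fa_mult)

lemma homogeneous_unique: "homogeneous m f \<Longrightarrow> homogeneous n f \<Longrightarrow> f \<noteq> (\<lambda>_. 0) \<Longrightarrow> m = n"
  by (auto simp: homogeneous_def)

definition degree_part :: "nat \<Rightarrow> (nat list \<Rightarrow> 'k::zero) \<Rightarrow> nat list \<Rightarrow> 'k" where
  "degree_part n f = (\<lambda>w. if length w = n then f w else 0)"

lemma degree_part_homogeneous: "homogeneous n f \<Longrightarrow> degree_part n f = f"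
  by (auto simp: degree_part_def homogeneous_def fun_eq_iff)

lemma degree_part_other_degree: "homogeneous m f \<Longrightarrow> m \<noteq> n \<Longrightarrow> degree_part n f = 0"
  by (auto simp: degree_part_def homogeneous_def fun_eq_iff)

lemma homogeneous_in_span_same_degree:
  fixes F :: "'i \<Rightarrow> nat list \<Rightarrow> 'k::field"
  assumes f: "f \<in> FA.span (F ` I)" "homogeneous n f"
    and hom: "\<And>i. i \<in> I \<Longrightarrow> homogeneous (deg i) (F i)"
  shows "f \<in> FA.span (F ` {i \<in> I. deg i = n})"
proof -
  let ?S = "FA.span (F ` {i \<in> I. deg i = n})"
  have "degree_part n f \<in> ?S"
    using f(1)
  proof (induction rule: FA.span_induct_alt)
    case base
    show ?case
      using FA.span_zero[of "F ` {i \<in> I. deg i = n}"] by (simp add: degree_part_def zero_fun_def)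
  next
    case (step c x y)
    then obtain i where i: "i \<in> I" "x = F i"
      by blast
    have "degree_part n x \<in> ?S"
    proof (cases "deg i = n")
      case True
      then show ?thesis
        using i hom[OF i(1)] by (simp add: degree_part_homogeneous FA.span_base)
    next
      case False
      then show ?thesis
        using i hom[OF i(1)] by (simp add: degree_part_other_degree FA.span_zero)
    qed
    then have "fa_scale c (degree_part n x) + degree_part n y \<in> ?S"
      using step.IH by (intro FA.span_add FA.span_scale)
    moreover have "degree_part n (fa_scale c x + y) = fa_scale c (degree_part n x) + degree_part n y"
      by (simp add: degree_part_def fa_scale_def fun_eq_iff)
    ultimately show ?case
      by (simp add: plus_fun_def)
  qed
  then show ?thesis
    using degree_part_homogeneous[OF f(2)] by simp
qed

section \<open>Leading words\<close>

definition has_leading_word :: "(nat list \<Rightarrow> 'k::zero) \<Rightarrow> nat list \<Rightarrow> bool" where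
  "has_leading_word f a \<longleftrightarrow> f a \<noteq> 0 \<and> (\<forall>w. f w \<noteq> 0 \<longrightarrow> a \<le> w)"

(* Words are ordered lexicographically.  This order is not well-founded, so the least
   support word \<open>leading_word f\<close> is only meaningful if it exists. *)
definition leading_word :: "(nat list \<Rightarrow> 'k::zero) \<Rightarrow> nat list" where
  "leading_word f = (LEAST w. f w \<noteq> 0)"

lemma leading_word_eq: "has_leading_word f a \<Longrightarrow> leading_word f = a"
  unfolding has_leading_word_def leading_word_def by (blast intro: Least_equality)

lemma independent_if_inj_leading_word:
  fixes B :: "(nat list \<Rightarrow> 'k::field) set"
  assumes lead: "\<And>b. b \<in> B \<Longrightarrow> \<exists>a. has_leading_word b a"
    and inj: "inj_on leading_word B"
  shows "FA.independent B"
  unfolding FA.dependent_explicit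
proof (intro notI, elim exE conjE)
  fix T u
  assume T: "finite T" "T \<subseteq> B" and sum0: "(\<Sum>b\<in>T. fa_scale (u b) b) = 0"
    and "\<exists>b\<in>T. u b \<noteq> 0"
  have lw: "has_leading_word b (leading_word b)" if "b \<in> B" for b
    using lead[OF that] leading_word_eq by blast
  define T' where "T' = {b \<in> T. u b \<noteq> 0}"
  have "finite T'" "T' \<noteq> {}"
    using T \<open>\<exists>b\<in>T. u b \<noteq> 0\<close> by (auto simp: T'_def)
  then obtain b0 where "is_arg_min leading_word (\<lambda>b. b \<in> T') b0"
    using ex_is_arg_min_if_finite by blast
  then have b0: "b0 \<in> T" "u b0 \<noteq> 0" and least: "\<And>b. b \<in> T' \<Longrightarrow> leading_word b0 \<le> leading_word b"
    by (auto simp: is_arg_min_linorder T'_def)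
  let ?a = "leading_word b0"
  have "(\<Sum>b\<in>T - {b0}. u b * b ?a) = 0"
  proof (rule sum.neutral, rule ballI, rule ccontr)
    fix b
    assume b: "b \<in> T - {b0}" and "u b * b ?a \<noteq> 0"
    then have "b \<in> T'" "leading_word b \<le> ?a"
      using T lw[of b] by (auto simp: T'_def has_leading_word_def)
    then have "leading_word b = ?a"
      using least by (simp add: order_antisym)
    then show False
      using inj b b0 T by (auto dest: inj_onD)
  qed
  then have "(\<Sum>b\<in>T. fa_scale (u b) b) ?a = u b0 * b0 ?a"
    using T b0 by (simp add: sum_fun_apply fa_scale_def sum.remove)
  also have "\<dots> \<noteq> 0"
    using b0 T lw[of b0] by (auto simp: has_leading_word_def)
  finally show False
    using sum0 by simp
qed

lemma has_leading_word_fa_one: "has_leading_word fa_one []"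
  by (simp add: has_leading_word_def fa_one_def)

(* Lexicographic comparison is compatible with concatenation only for prefixes of equal
   length, whence the homogeneity of the left factor. *)
lemma has_leading_word_fa_mult:
  fixes f g :: "nat list \<Rightarrow> 'k::field"
  assumes hom: "homogeneous (length a) f"
    and f: "has_leading_word f a" and g: "has_leading_word g b"
  shows "has_leading_word (fa_mult f g) (a @ b)"
  unfolding has_leading_word_def
proof (intro conjI allI impI)
  have "fa_mult f g (a @ b) = f a * g b"
    by (simp add: fa_mult_homogeneous_apply[OF hom])
  then show "fa_mult f g (a @ b) \<noteq> 0"
    using f g by (simp add: has_leading_word_def)
next
  fix w
  assume "fa_mult f g w \<noteq> 0"
  then obtain i where "f (take i w) \<noteq> 0" "g (drop i w) \<noteq> 0"
    by (rule fa_mult_nonzero_split)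
  then have "length a = length (take i w)" "a \<le> take i w" "b \<le> drop i w"
    using hom f g unfolding homogeneous_def has_leading_word_def by metis+
  then have "a @ b \<le> take i w @ drop i w"
    by (rule append_le_append_same_length)
  then show "a @ b \<le> w"
    by simp
qed

section \<open>The cyclic action\<close>

definition shift_word :: "nat \<Rightarrow> nat \<Rightarrow> nat list \<Rightarrow> nat list" where
  "shift_word d c w = map (\<lambda>i. (i + c) mod d) w"

lemma length_shift_word [simp]: "length (shift_word d c w) = length w"
  by (simp add: shift_word_def)

lemma shift_word_Nil [simp]: "shift_word d c [] = []"
  by (simp add: shift_word_def)

lemma shift_word_eq_Nil_iff [simp]: "shift_word d c w = [] \<longleftrightarrow> w = []"
  by (simp add: shift_word_def)

lemma hd_shift_word: "w \<noteq> [] \<Longrightarrow> hd (shift_word d c w) = (hd w + c) mod d"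
  by (cases w) (simp_all add: shift_word_def)

lemma shift_word_in_lists: "0 < d \<Longrightarrow> shift_word d c w \<in> lists {..<d}"
  by (auto simp: shift_word_def)

lemma shift_word_shift_word: "shift_word d a (shift_word d b w) = shift_word d (a + b) w"
  by (simp add: shift_word_def mod_add_right_eq ac_simps)

lemma shift_word_mod: "shift_word d (c mod d) w = shift_word d c w"
  by (simp add: shift_word_def mod_add_right_eq)

lemma shift_word_0: "w \<in> lists {..<d} \<Longrightarrow> shift_word d 0 w = w"
  by (auto simp: shift_word_def intro!: map_idI)

lemma shift_word_self: "w \<in> lists {..<d} \<Longrightarrow> shift_word d d w = w"
  by (metis mod_self shift_word_0 shift_word_mod)

lemma take_shift_word: "take i (shift_word d c w) = shift_word d c (take i w)"
  by (simp add: shift_word_def take_map)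

lemma drop_shift_word: "drop i (shift_word d c w) = shift_word d c (drop i w)"
  by (simp add: shift_word_def drop_map)

lemma fa_rho_eq_shift_word:
  "0 < d \<Longrightarrow> fa_rho d f = (\<lambda>w. if w \<in> lists {..<d} then f (shift_word d (d - 1) w) else 0)"
  unfolding fa_rho_def shift_word_def by (auto intro!: ext arg_cong[where f = f])

lemma invariants_iff:
  assumes "0 < d"
  shows "f \<in> invariants d \<longleftrightarrow>
    f \<in> free_alg d \<and> (\<forall>c. \<forall>w\<in>lists {..<d}. f (shift_word d c w) = f w)"
proof
  assume "f \<in> invariants d"
  then have f: "f \<in> free_alg d" and rho: "fa_rho d f = f"
    by (auto simp: invariants_def)
  have rho_step: "f (shift_word d (d - 1) w) = f w" if "w \<in> lists {..<d}" for w
    using that fun_cong[OF rho, of w] by (simp add: fa_rho_eq_shift_word[OF assms])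
  have step: "f (shift_word d 1 w) = f w" if "w \<in> lists {..<d}" for w
  proof -
    have "shift_word d (d - 1) (shift_word d 1 w) = w"
      using assms that by (simp add: shift_word_shift_word shift_word_self)
    then show ?thesis
      using rho_step[OF shift_word_in_lists[OF assms], of 1 w] by simp
  qed
  have "f (shift_word d c w) = f w" if "w \<in> lists {..<d}" for c w
  proof (induction c)
    case 0
    then show ?case using that by (simp add: shift_word_0)
  next
    case (Suc c)
    then show ?case
      using step[OF shift_word_in_lists[OF assms]] by (simp add: shift_word_shift_word)
  qed
  with f show "f \<in> free_alg d \<and> (\<forall>c. \<forall>w\<in>lists {..<d}. f (shift_word d c w) = f w)"
    by blast
next
  assume "f \<in> free_alg d \<and> (\<forall>c. \<forall>w\<in>lists {..<d}. f (shift_word d c w) = f w)"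
  then show "f \<in> invariants d"
    unfolding invariants_def fa_rho_eq_shift_word[OF assms] free_alg_iff by (auto intro!: ext) blast
qed

lemma invariant_support: "f \<in> invariants d \<Longrightarrow> f w \<noteq> 0 \<Longrightarrow> w \<in> lists {..<d}"
  by (auto simp: invariants_def free_alg_iff)

lemma subspace_invariants:
  assumes "0 < d"
  shows "FA.subspace (invariants d :: (nat list \<Rightarrow> 'k::field) set)"
proof (rule FA.subspaceI)
  show "0 \<in> (invariants d :: (nat list \<Rightarrow> 'k) set)"
    by (simp add: invariants_iff[OF assms] free_alg_iff)
next
  fix f g :: "nat list \<Rightarrow> 'k"
  assume "f \<in> invariants d" "g \<in> invariants d"
  moreover have "{w. (f + g) w \<noteq> 0} \<subseteq> {w. f w \<noteq> 0} \<union> {w. g w \<noteq> 0}"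
    by auto
  ultimately show "f + g \<in> invariants d"
    by (simp add: invariants_iff[OF assms] free_alg_iff)
      (metis (mono_tags, lifting) add.left_neutral finite_UnI finite_subset)
next
  fix c :: 'k and f :: "nat list \<Rightarrow> 'k"
  assume "f \<in> invariants d"
  moreover have "{w. fa_scale c f w \<noteq> 0} \<subseteq> {w. f w \<noteq> 0}"
    by (auto simp: fa_scale_def)
  ultimately show "fa_scale c f \<in> invariants d"
    by (auto simp: invariants_iff[OF assms] free_alg_iff fa_scale_def intro: finite_subset)
qed

lemma fa_one_invariant: "0 < d \<Longrightarrow> fa_one \<in> invariants d"
  by (simp add: invariants_iff free_alg_iff fa_one_def)

lemma fa_mult_invariant:
  assumes d: "0 < d" and f: "f \<in> invariants d" and g: "g \<in> invariants d"
  shows "fa_mult f g \<in> invariants d"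
proof -
  have "{w. fa_mult f g w \<noteq> 0} \<subseteq> (\<lambda>(x, y). x @ y) ` ({x. f x \<noteq> 0} \<times> {y. g y \<noteq> 0})"
    by (auto elim!: fa_mult_nonzero_split intro!: image_eqI[of _ _ "(take i w, drop i w)" for i w])
  moreover have "finite {x. f x \<noteq> 0}" "finite {y. g y \<noteq> 0}"
    using f g by (auto simp: invariants_iff[OF d] free_alg_iff)
  ultimately have "finite {w. fa_mult f g w \<noteq> 0}"
    by (meson finite_SigmaI finite_imageI finite_subset)
  moreover have "w \<in> lists {..<d}" if "fa_mult f g w \<noteq> 0" for w
    using that by (elim fa_mult_nonzero_split)
      (metis append_in_lists_conv append_take_drop_id invariant_support f g)
  moreover have "fa_mult f g (shift_word d c w) = fa_mult f g w" if "w \<in> lists {..<d}" for c w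
  proof -
    have "take i w \<in> lists {..<d}" "drop i w \<in> lists {..<d}" for i
      using that by (auto dest: in_set_takeD in_set_dropD)
    then show ?thesis
      using f g by (simp add: fa_mult_def take_shift_word drop_shift_word invariants_iff[OF d])
  qed
  ultimately show ?thesis
    by (simp add: invariants_iff[OF d] free_alg_iff)
qed

lemma fa_prod_invariant: "0 < d \<Longrightarrow> set zs \<subseteq> invariants d \<Longrightarrow> fa_prod zs \<in> invariants d"
  by (induction zs) (auto simp: fa_prod_def fa_one_invariant fa_mult_invariant)

lemma degree_part_in_inv_component:
  assumes d: "0 < d" and f: "f \<in> invariants d"
  shows "degree_part n f \<in> inv_component d n"
proof -
  have "finite {w. f w \<noteq> 0}" and support: "\<And>w. f w \<noteq> 0 \<Longrightarrow> w \<in> lists {..<d}"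
    using f unfolding invariants_def free_alg_iff by blast+
  moreover have "{w. degree_part n f w \<noteq> 0} \<subseteq> {w. f w \<noteq> 0}"
    by (auto simp: degree_part_def)
  ultimately have "degree_part n f \<in> free_alg d"
    unfolding free_alg_iff by (auto intro: finite_subset support simp del: in_lists_conv_set)
  moreover have "degree_part n f (shift_word d c w) = degree_part n f w"
    if "w \<in> lists {..<d}" for c w
    using f that by (simp add: degree_part_def invariants_iff[OF d])
  moreover have "homogeneous n (degree_part n f)"
    by (simp add: homogeneous_def degree_part_def)
  ultimately show ?thesis
    by (simp add: inv_component_def invariants_iff[OF d])
qed

lemma sum_degree_parts:
  assumes "finite {w. f w \<noteq> 0}"
  shows "(\<Sum>n\<in>length ` {w. f w \<noteq> 0}. degree_part n f) = f"
proof
  fix w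
  have "(\<Sum>n\<in>length ` {w. f w \<noteq> 0}. degree_part n f) w
      = (\<Sum>n\<in>length ` {w. f w \<noteq> 0}. if n = length w then f w else 0)"
    by (auto simp: sum_fun_apply degree_part_def intro!: sum.cong)
  also have "\<dots> = (if length w \<in> length ` {w. f w \<noteq> 0} then f w else 0)"
    using assms by (simp add: sum.delta)
  also have "\<dots> = f w"
    by auto
  finally show "(\<Sum>n\<in>length ` {w. f w \<noteq> 0}. degree_part n f) w = f w" .
qed

lemma invariants_subset_span_inv_components:
  assumes d: "0 < d"
  shows "invariants d \<subseteq> FA.span (\<Union>n. inv_component d n :: (nat list \<Rightarrow> 'k::field) set)"
proof
  fix f :: "nat list \<Rightarrow> 'k"
  assume f: "f \<in> invariants d"
  then have "finite {w. f w \<noteq> 0}"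
    by (simp add: invariants_def free_alg_iff)
  moreover have "(\<Sum>n\<in>length ` {w. f w \<noteq> 0}. degree_part n f) \<in> FA.span (\<Union>n. inv_component d n)"
    using degree_part_in_inv_component[OF d f] by (intro FA.span_sum FA.span_base) blast
  ultimately show "f \<in> FA.span (\<Union>n. inv_component d n)"
    by (simp add: sum_degree_parts)
qed

section \<open>Orbit sums and the Hilbert series\<close>

(* The representatives of the \<rho>-orbits of words of length n: one per orbit. *)
definition normal_words :: "nat \<Rightarrow> nat \<Rightarrow> nat list set" where
  "normal_words d n = {w \<in> lists {..<d}. length w = n \<and> (w = [] \<or> hd w = 0)}"

definition orbit_rep :: "nat \<Rightarrow> nat list \<Rightarrow> nat list" where
  "orbit_rep d w = shift_word d (d - hd w) w"

lemma length_orbit_rep [simp]: "length (orbit_rep d w) = length w"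
  by (simp add: orbit_rep_def)

lemma orbit_rep_eq_Nil_iff [simp]: "orbit_rep d w = [] \<longleftrightarrow> w = []"
  by (simp add: orbit_rep_def)

lemma orbit_rep_shift_word:
  assumes "w \<in> lists {..<d}"
  shows "orbit_rep d (shift_word d c w) = orbit_rep d w"
proof (cases "w = []")
  case False
  define h where "h = hd w"
  have "h < d"
    using assms False by (cases w) (simp_all add: h_def)
  have mod_eq: "(d - (h + c) mod d + c) mod d = (d - h) mod d"
  proof -
    define q r where "q = (h + c) div d" and "r = (h + c) mod d"
    have "h + c = q * d + r" and "r < d"
      using \<open>h < d\<close> by (simp_all add: q_def r_def)
    then have "d - r + c = (d - h) + q * d"
      using \<open>h < d\<close> by linarith
    then show ?thesis
      by (simp add: r_def)
  qed
  have "orbit_rep d (shift_word d c w) = shift_word d (d - (h + c) mod d + c) w"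
    using False by (simp add: orbit_rep_def hd_shift_word shift_word_shift_word h_def)
  also have "\<dots> = shift_word d (d - h) w"
    by (metis mod_eq shift_word_mod)
  finally show ?thesis
    by (simp add: orbit_rep_def h_def)
qed simp

lemma orbit_rep_in_normal_words:
  "0 < d \<Longrightarrow> w \<in> lists {..<d} \<Longrightarrow> orbit_rep d w \<in> normal_words d (length w)"
  by (cases w) (auto simp: normal_words_def orbit_rep_def shift_word_def)

lemma orbit_rep_normal: "w \<in> normal_words d n \<Longrightarrow> orbit_rep d w = w"
  by (cases w) (auto simp: normal_words_def orbit_rep_def shift_word_self)

lemma orbit_rep_le:
  assumes "0 < d" "w \<in> lists {..<d}"
  shows "orbit_rep d w \<le> w"
proof (cases w)
  case (Cons h t)
  show ?thesis
  proof (cases "h = 0")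
    case True
    then show ?thesis
      using Cons assms by (simp add: orbit_rep_normal normal_words_def)
  next
    case False
    then have "hd (orbit_rep d w) < hd w"
      using Cons assms by (simp add: orbit_rep_def shift_word_def)
    then show ?thesis
      using Cons by (cases "orbit_rep d w") auto
  qed
qed simp

lemma invariant_orbit_rep:
  "0 < d \<Longrightarrow> f \<in> invariants d \<Longrightarrow> w \<in> lists {..<d} \<Longrightarrow> f (orbit_rep d w) = f w"
  unfolding orbit_rep_def by (simp add: invariants_iff)

lemma finite_normal_words: "finite (normal_words d n)"
proof -
  have "normal_words d n \<subseteq> {w. set w \<subseteq> {..<d} \<and> length w = n}"
    by (auto simp: normal_words_def)
  then show ?thesis
    by (rule finite_subset) (simp add: finite_lists_length_eq)
qed

lemma card_normal_words:
  assumes "0 < d"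
  shows "card (normal_words d n) = (if n = 0 then 1 else d ^ (n - 1))"
proof (cases n)
  case 0
  then have "normal_words d n = {[]}"
    by (auto simp: normal_words_def)
  then show ?thesis
    using 0 by simp
next
  case (Suc m)
  then have "normal_words d n = (#) 0 ` {t. set t \<subseteq> {..<d} \<and> length t = m}"
    using assms by (auto simp: normal_words_def length_Suc_conv)
  then have "card (normal_words d n) = card {t. set t \<subseteq> {..<d} \<and> length t = m}"
    by (simp add: card_image)
  then show ?thesis
    using Suc by (simp add: card_lists_length_eq)
qed

definition orbit_sum :: "nat \<Rightarrow> nat list \<Rightarrow> nat list \<Rightarrow> 'k::field" where
  "orbit_sum d v w = (if w \<in> lists {..<d} \<and> orbit_rep d w = v then 1 else 0)"

lemma orbit_sum_in_inv_component:
  assumes d: "0 < d"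
  shows "orbit_sum d v \<in> inv_component d (length v)"
proof -
  have "{w. orbit_sum d v w \<noteq> 0} \<subseteq> {w. set w \<subseteq> {..<d} \<and> length w = length v}"
    by (auto simp: orbit_sum_def)
  then have "finite {w. orbit_sum d v w \<noteq> 0}"
    by (rule finite_subset) (simp add: finite_lists_length_eq)
  then show ?thesis
    using d shift_word_in_lists[OF d]
    by (auto simp: inv_component_def invariants_iff free_alg_iff homogeneous_def orbit_sum_def
        orbit_rep_shift_word simp del: in_lists_conv_set split: if_splits)
qed

lemma has_leading_word_orbit_sum:
  "0 < d \<Longrightarrow> v \<in> normal_words d n \<Longrightarrow> has_leading_word (orbit_sum d v) v"
  by (auto simp: has_leading_word_def orbit_sum_def orbit_rep_normal normal_words_def
      simp del: in_lists_conv_set split: if_splits dest: orbit_rep_le)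

lemma inv_component_expansion:
  assumes d: "0 < d" and f: "f \<in> inv_component d n"
  shows "f = (\<Sum>v\<in>normal_words d n. fa_scale (f v) (orbit_sum d v))"
proof
  fix w
  have fi: "f \<in> invariants d" and fh: "homogeneous n f"
    using f by (auto simp: inv_component_def)
  have "(\<Sum>v\<in>normal_words d n. fa_scale (f v) (orbit_sum d v)) w
      = (\<Sum>v\<in>normal_words d n. if v = orbit_rep d w \<and> w \<in> lists {..<d} then f v else 0)"
    by (auto simp: sum_fun_apply fa_scale_def orbit_sum_def intro!: sum.cong)
  also have "\<dots> = f w"
  proof (cases "w \<in> lists {..<d} \<and> length w = n")
    case True
    then have "orbit_rep d w \<in> normal_words d n"
      using orbit_rep_in_normal_words[OF d] by blast
    then show ?thesis
      using True by (simp add: finite_normal_words invariant_orbit_rep[OF d fi])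
  next
    case False
    then have "f w = 0"
      using invariant_support[OF fi] fh by (auto simp: homogeneous_def)
    moreover have "\<not> (v = orbit_rep d w \<and> w \<in> lists {..<d})" if "v \<in> normal_words d n" for v
      using False that by (auto simp: normal_words_def)
    ultimately show ?thesis
      by (subst sum.neutral) auto
  qed
  finally show "f w = (\<Sum>v\<in>normal_words d n. fa_scale (f v) (orbit_sum d v)) w"
    by simp
qed

lemma inv_component_subset_span_orbit_sums:
  assumes d: "0 < d"
  shows "inv_component d n \<subseteq> FA.span (orbit_sum d ` normal_words d n :: (nat list \<Rightarrow> 'k::field) set)"
proof
  fix f :: "nat list \<Rightarrow> 'k"
  assume "f \<in> inv_component d n"
  moreover have "(\<Sum>v\<in>normal_words d n. fa_scale (f v) (orbit_sum d v))
      \<in> FA.span (orbit_sum d ` normal_words d n)"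
    by (intro FA.span_sum FA.span_scale FA.span_base) auto
  ultimately show "f \<in> FA.span (orbit_sum d ` normal_words d n)"
    using inv_component_expansion[OF d] by metis
qed

lemma dim_inv_component:
  assumes d: "0 < d"
  shows "FA.dim (inv_component d n :: (nat list \<Rightarrow> 'k::field) set)
    = (if n = 0 then 1 else d ^ (n - 1))"
proof -
  let ?B = "orbit_sum d ` normal_words d n :: (nat list \<Rightarrow> 'k) set"
  have lead: "leading_word (orbit_sum d v :: nat list \<Rightarrow> 'k) = v" if "v \<in> normal_words d n" for v
    using has_leading_word_orbit_sum[OF d that] by (rule leading_word_eq)
  then have inj: "inj_on (orbit_sum d :: _ \<Rightarrow> _ \<Rightarrow> 'k) (normal_words d n)"
    by (metis inj_onI)
  have "?B \<subseteq> inv_component d n"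
    using orbit_sum_in_inv_component[OF d] by (auto simp: normal_words_def)
  moreover have "inv_component d n \<subseteq> FA.span ?B"
    by (rule inv_component_subset_span_orbit_sums[OF d])
  moreover have "FA.independent ?B"
    using lead has_leading_word_orbit_sum[OF d]
    by (intro independent_if_inj_leading_word) (auto intro!: inj_onI)
  ultimately have "card ?B = FA.dim (inv_component d n :: (nat list \<Rightarrow> 'k) set)"
    by (rule FA.basis_card_eq_dim)
  moreover have "card ?B = card (normal_words d n)"
    by (rule card_image[OF inj])
  ultimately show ?thesis
    using card_normal_words[OF d] by simp
qed

lemma inv_dim_eq:
  "0 < d \<Longrightarrow> inv_dim (K :: 'k::field itself) d n = (if n = 0 then 1 else d ^ (n - 1))"
  unfolding inv_dim_def by (rule dim_inv_component)

lemma hilbert_series_eq: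
  assumes "0 < d"
  shows "hilbert_series (K :: 'k::field itself) d
    = (1 - of_nat (d - 1) * fps_X) / (1 - of_nat d * fps_X)"
proof -
  have "hilbert_series K d = Abs_fps (\<lambda>n. if n = 0 then 1 else of_nat d ^ (n - 1))"
    unfolding hilbert_series_def by (intro arg_cong[where f = Abs_fps] ext) (simp add: inv_dim_eq[OF assms])
  also have "\<dots> = (1 - fps_const (of_nat d - 1) * fps_X) / (1 - fps_const (of_nat d) * fps_X)"
    by (rule Abs_fps_geometric_tail)
  moreover have "fps_const (of_nat d - 1 :: rat) = of_nat (d - 1)"
    using assms by (simp add: of_nat_diff flip: fps_of_nat)
  ultimately show ?thesis
    by (simp add: fps_of_nat)
qed

section \<open>A free generating set of the invariants\<close>

definition generator_words :: "nat \<Rightarrow> nat list set" where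
  "generator_words d = {0 # t | t. t \<in> lists {1..<d}}"

lemma generator_wordsE:
  assumes "v \<in> generator_words d"
  obtains t where "v = 0 # t" "0 \<notin> set t"
proof -
  obtain t where "v = 0 # t" "t \<in> lists {1..<d}"
    using assms by (auto simp: generator_words_def)
  moreover from this(2) have "0 \<notin> set t"
    by auto
  ultimately show thesis
    using that by blast
qed

lemma generator_word_normal:
  "0 < d \<Longrightarrow> v \<in> generator_words d \<Longrightarrow> v \<in> normal_words d (length v)"
  by (auto simp: generator_words_def normal_words_def)

lemma concat_generator_words_normal:
  assumes "0 < d" "vs \<in> lists (generator_words d)"
  shows "concat vs \<in> normal_words d (length (concat vs))"
proof -
  have "set v \<subseteq> {..<d}" if "v \<in> set vs" for v
    using that assms generator_word_normal[OF assms(1)] by (auto simp: normal_words_def)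
  then have "concat vs \<in> lists {..<d}"
    by (auto simp del: in_lists_conv_set simp add: lists_eq_set)
  moreover have "concat vs = [] \<or> hd (concat vs) = 0"
    using assms(2) by (cases vs) (auto simp: generator_words_def)
  ultimately show ?thesis
    by (simp add: normal_words_def)
qed

lemma zero_Cons_append_in_concat_generator_words:
  assumes "t \<in> lists {1..<d}" "w \<in> lists {..<d}"
  shows "0 # t @ w \<in> concat ` lists (generator_words d)"
  using assms
proof (induction w arbitrary: t)
  case Nil
  then have "[0 # t] \<in> lists (generator_words d)"
    by (simp add: generator_words_def)
  then show ?case
    by (rule image_eqI[rotated]) simp
next
  case (Cons a w)
  show ?case
  proof (cases "a = 0")
    case True
    have "0 # [] @ w \<in> concat ` lists (generator_words d)"
      using Cons.prems by (intro Cons.IH) auto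
    then obtain vs where vs: "vs \<in> lists (generator_words d)" "concat vs = 0 # w"
      by (metis append.left_neutral imageE)
    have "(0 # t) # vs \<in> lists (generator_words d)"
      using Cons.prems vs(1) by (simp add: generator_words_def)
    then show ?thesis
      by (rule image_eqI[rotated]) (simp add: vs(2) True)
  next
    case False
    then have "0 # (t @ [a]) @ w \<in> concat ` lists (generator_words d)"
      using Cons.prems by (intro Cons.IH) auto
    then show ?thesis
      by simp
  qed
qed

lemma normal_words_eq_concat_image:
  assumes "0 < d"
  shows "normal_words d n = concat ` {vs \<in> lists (generator_words d). length (concat vs) = n}"
proof
  show "concat ` {vs \<in> lists (generator_words d). length (concat vs) = n} \<subseteq> normal_words d n"
    using concat_generator_words_normal[OF assms] by auto
next
  show "normal_words d n \<subseteq> concat ` {vs \<in> lists (generator_words d). length (concat vs) = n}"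
  proof
    fix w
    assume w: "w \<in> normal_words d n"
    have "w \<in> concat ` lists (generator_words d)"
    proof (cases w)
      case Nil
      then show ?thesis
        by (intro image_eqI[of _ _ "[]"]) auto
    next
      case (Cons a w')
      then show ?thesis
        using w zero_Cons_append_in_concat_generator_words[of "[]" d w']
        by (simp add: normal_words_def)
    qed
    then show "w \<in> concat ` {vs \<in> lists (generator_words d). length (concat vs) = n}"
      using w by (auto simp: normal_words_def)
  qed
qed

lemma inj_on_concat_generator_words: "inj_on concat (lists (generator_words d))"
proof (rule inj_onI)
  show "vs = ws"
    if "vs \<in> lists (generator_words d)" "ws \<in> lists (generator_words d)" "concat vs = concat ws"
    for vs ws
    using that
  proof (induction vs arbitrary: ws)
    case Nil
    then show ?case
      by (cases ws) (auto simp: generator_words_def)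
  next
    case (Cons v vs)
    obtain t where t: "v = 0 # t" "0 \<notin> set t"
      using Cons.hyps(1) by (rule generator_wordsE)
    obtain w ws' where ws: "ws = w # ws'"
      using Cons.prems t by (cases ws) auto
    have "w \<in> generator_words d"
      using Cons.prems ws by simp
    then obtain t' where t': "w = 0 # t'" "0 \<notin> set t'"
      by (rule generator_wordsE)
    have heads: "concat us = [] \<or> hd (concat us) = 0" if "us \<in> lists (generator_words d)" for us
      using that by (cases us) (auto simp: generator_words_def)
    have vs: "vs \<in> lists (generator_words d)" and ws': "ws' \<in> lists (generator_words d)"
      using Cons.hyps(2) Cons.prems ws by auto
    have eq: "t @ concat vs = t' @ concat ws'"
      using Cons.prems t t' ws by simp
    then have "t = t'"
      using takeWhile_nonzero_append[OF t(2) heads[OF vs]]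
        takeWhile_nonzero_append[OF t'(2) heads[OF ws']] by simp
    with eq have "vs = ws'"
      using Cons.IH[OF ws'] by simp
    then show ?case
      using ws t t' \<open>t = t'\<close> by simp
  qed
qed

definition orbit_prod :: "nat \<Rightarrow> nat list list \<Rightarrow> nat list \<Rightarrow> 'k::field" where
  "orbit_prod d vs = fa_prod (map (orbit_sum d) vs)"

lemma orbit_prod_in_inv_component:
  assumes d: "0 < d"
  shows "orbit_prod d vs \<in> inv_component d (length (concat vs))"
proof -
  have "orbit_prod d vs \<in> invariants d"
    unfolding orbit_prod_def using orbit_sum_in_inv_component[OF d]
    by (intro fa_prod_invariant[OF d]) (auto simp: inv_component_def)
  moreover have "homogeneous (length v) (orbit_sum d v)" for v
    using orbit_sum_in_inv_component[OF d] unfolding inv_component_def by blast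
  then have "homogeneous (sum_list (map length vs)) (orbit_prod d vs)"
    unfolding orbit_prod_def by (intro homogeneous_fa_prod_map)
  ultimately show ?thesis
    by (simp add: inv_component_def length_concat)
qed

lemma has_leading_word_orbit_prod:
  assumes d: "0 < d"
  shows "vs \<in> lists (generator_words d) \<Longrightarrow>
    has_leading_word (orbit_prod d vs :: nat list \<Rightarrow> 'k::field) (concat vs)"
proof (induction vs)
  case Nil
  then show ?case
    by (simp add: orbit_prod_def fa_prod_def has_leading_word_fa_one)
next
  case (Cons v vs)
  then have "v \<in> generator_words d" and vs: "vs \<in> lists (generator_words d)"
    by simp_all
  then have "v \<in> normal_words d (length v)"
    by (simp add: generator_word_normal[OF d])
  then have "homogeneous (length v) (orbit_sum d v :: nat list \<Rightarrow> 'k)"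
    and "has_leading_word (orbit_sum d v :: nat list \<Rightarrow> 'k) v"
    using orbit_sum_in_inv_component[OF d] has_leading_word_orbit_sum[OF d]
    by (auto simp: inv_component_def)
  moreover have "orbit_prod d (v # vs) = fa_mult (orbit_sum d v) (orbit_prod d vs :: _ \<Rightarrow> 'k)"
    by (simp add: orbit_prod_def fa_prod_def)
  ultimately show ?case
    using Cons.IH[OF vs] by (simp add: has_leading_word_fa_mult)
qed

lemma leading_word_orbit_prod:
  "0 < d \<Longrightarrow> vs \<in> lists (generator_words d) \<Longrightarrow> leading_word (orbit_prod d vs) = concat vs"
  by (rule leading_word_eq[OF has_leading_word_orbit_prod])

lemma inj_on_orbit_prod: "0 < d \<Longrightarrow> inj_on (orbit_prod d) (lists (generator_words d))"
  by (rule inj_onI) (metis inj_on_concat_generator_words[THEN inj_onD] leading_word_orbit_prod)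

lemma independent_orbit_prods:
  assumes d: "0 < d"
  shows "FA.independent (orbit_prod d ` lists (generator_words d) :: (nat list \<Rightarrow> 'k::field) set)"
proof (rule independent_if_inj_leading_word)
  show "\<exists>a. has_leading_word b a" if "b \<in> orbit_prod d ` lists (generator_words d)"
    for b :: "nat list \<Rightarrow> 'k"
    using that has_leading_word_orbit_prod[OF d] by blast
  show "inj_on leading_word (orbit_prod d ` lists (generator_words d) :: (nat list \<Rightarrow> 'k) set)"
  proof (rule inj_onI)
    fix b b' :: "nat list \<Rightarrow> 'k"
    assume "b \<in> orbit_prod d ` lists (generator_words d)" "b' \<in> orbit_prod d ` lists (generator_words d)"
      and lead: "leading_word b = leading_word b'"
    then obtain vs ws where "vs \<in> lists (generator_words d)" "b = orbit_prod d vs"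
      and "ws \<in> lists (generator_words d)" "b' = orbit_prod d ws"
      by blast
    with lead show "b = b'"
      using inj_on_concat_generator_words[THEN inj_onD] leading_word_orbit_prod[OF d] by metis
  qed
qed

lemma inv_component_subset_span_orbit_prods:
  assumes d: "0 < d"
  shows "inv_component d n \<subseteq> FA.span (orbit_prod d ` {vs \<in> lists (generator_words d). length (concat vs) = n}
    :: (nat list \<Rightarrow> 'k::field) set)"
proof (rule FA.subset_span_if_card_ge_dim)
  show "finite (orbit_sum d ` normal_words d n :: (nat list \<Rightarrow> 'k) set)"
    by (simp add: finite_normal_words)
  show "inv_component d n \<subseteq> FA.span (orbit_sum d ` normal_words d n :: (nat list \<Rightarrow> 'k) set)"
    by (rule inv_component_subset_span_orbit_sums[OF d])
  let ?V = "{vs \<in> lists (generator_words d). length (concat vs) = n}"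
  let ?P = "orbit_prod d ` ?V :: (nat list \<Rightarrow> 'k) set"
  show "?P \<subseteq> inv_component d n"
    using orbit_prod_in_inv_component[OF d] by auto
  show "FA.independent ?P"
    using independent_orbit_prods[OF d] by (rule FA.independent_mono) auto
  have "?V \<subseteq> lists (generator_words d)"
    by blast
  then have "inj_on (orbit_prod d :: _ \<Rightarrow> _ \<Rightarrow> 'k) ?V" "inj_on concat ?V"
    using inj_on_orbit_prod[OF d] inj_on_concat_generator_words by (blast intro: inj_on_subset)+
  then have "card ?P = card (normal_words d n)"
    unfolding normal_words_eq_concat_image[OF d] by (simp add: card_image)
  also have "\<dots> = FA.dim (inv_component d n :: (nat list \<Rightarrow> 'k) set)"
    using dim_inv_component[OF d, where 'k = 'k] card_normal_words[OF d] by simp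
  finally show "FA.dim (inv_component d n :: (nat list \<Rightarrow> 'k) set) \<le> card ?P"
    by simp
qed

lemma span_orbit_prods:
  assumes d: "0 < d"
  shows "FA.span (orbit_prod d ` lists (generator_words d) :: (nat list \<Rightarrow> 'k::field) set)
    = invariants d"
proof
  let ?G = "generator_words d"
  let ?P = "orbit_prod d ` lists ?G :: (nat list \<Rightarrow> 'k) set"
  have "orbit_prod d vs \<in> invariants d" for vs
    using orbit_prod_in_inv_component[OF d, of vs] unfolding inv_component_def by blast
  then show "FA.span ?P \<subseteq> invariants d"
    by (intro FA.span_minimal[OF _ subspace_invariants[OF d]]) auto
  have "inv_component d n \<subseteq> FA.span ?P" for n
  proof -
    have "orbit_prod d ` {vs \<in> lists ?G. length (concat vs) = n} \<subseteq> ?P"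
      by auto
    then have "FA.span (orbit_prod d ` {vs \<in> lists ?G. length (concat vs) = n}) \<subseteq> FA.span ?P"
      by (rule FA.span_mono)
    with inv_component_subset_span_orbit_prods[OF d] show ?thesis
      by (rule order_trans)
  qed
  then have "(\<Union>n. inv_component d n) \<subseteq> FA.span ?P"
    by (rule UN_least)
  then have "FA.span (\<Union>n. inv_component d n) \<subseteq> FA.span ?P"
    by (rule FA.span_minimal[OF _ FA.subspace_span])
  then show "invariants d \<subseteq> FA.span ?P"
    by (rule order_trans[OF invariants_subset_span_inv_components[OF d]])
qed

lemma orbit_sum_generator_word:
  assumes d: "0 < d" and v: "v \<in> generator_words d"
  shows "length v \<ge> 1" "homogeneous (length v) (orbit_sum d v :: nat list \<Rightarrow> 'k::field)"
    "orbit_sum d v \<noteq> (\<lambda>_. 0 :: 'k)"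
proof -
  show "length v \<ge> 1"
    using v by (auto simp: generator_words_def)
  show "homogeneous (length v) (orbit_sum d v :: nat list \<Rightarrow> 'k)"
    using orbit_sum_in_inv_component[OF d, of v] unfolding inv_component_def by blast
  have "(orbit_sum d v v :: 'k) \<noteq> 0"
    using has_leading_word_orbit_sum[OF d generator_word_normal[OF d v]]
    unfolding has_leading_word_def by blast
  then show "orbit_sum d v \<noteq> (\<lambda>_. 0 :: 'k)"
    by force
qed

lemma free_homog_generators_orbit_sums:
  assumes d: "0 < d"
  shows "free_homog_generators d (orbit_sum d ` generator_words d :: (nat list \<Rightarrow> 'k::field) set)"
proof -
  let ?G = "generator_words d"
  let ?Z = "orbit_sum d ` ?G :: (nat list \<Rightarrow> 'k) set"
  have lists_Z: "lists ?Z = map (orbit_sum d) ` lists ?G"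
    by (rule lists_image)
  then have products: "fa_prod ` lists ?Z = orbit_prod d ` lists ?G"
    by (simp add: image_image orbit_prod_def)
  have "inj_on fa_prod (lists ?Z)"
  proof (rule inj_onI)
    fix zs zs'
    assume "zs \<in> lists ?Z" "zs' \<in> lists ?Z" and eq: "fa_prod zs = fa_prod zs'"
    then obtain vs vs' where vs: "vs \<in> lists ?G" "zs = map (orbit_sum d) vs"
      and vs': "vs' \<in> lists ?G" "zs' = map (orbit_sum d) vs'"
      unfolding lists_Z by blast
    have "orbit_prod d vs = (orbit_prod d vs' :: nat list \<Rightarrow> 'k)"
      using eq vs(2) vs'(2) by (simp add: orbit_prod_def)
    then have "vs = vs'"
      by (rule inj_onD[OF inj_on_orbit_prod[OF d] _ vs(1) vs'(1)])
    then show "zs = zs'"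
      using vs(2) vs'(2) by simp
  qed
  moreover have "?Z \<subseteq> invariants d"
    using orbit_sum_in_inv_component[OF d] by (auto simp: inv_component_def)
  moreover have "\<forall>z\<in>?Z. \<exists>n\<ge>1. homogeneous n z \<and> z \<noteq> (\<lambda>_. 0)"
    using orbit_sum_generator_word[OF d] by blast
  ultimately show ?thesis
    unfolding free_homog_generators_def products
    using independent_orbit_prods[OF d] span_orbit_prods[OF d] by blast
qed

section \<open>Degrees of arbitrary free generators\<close>

lemma card_weighted_lists_free_generators:
  fixes Z :: "(nat list \<Rightarrow> 'k::field) set"
  assumes d: "0 < d" and Z: "free_homog_generators d Z"
    and deg: "\<And>z. z \<in> Z \<Longrightarrow> homogeneous (deg z) z" and m: "m \<ge> 1"
  shows "card (weighted_lists Z deg m) = d ^ (m - 1)"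
proof -
  have inj: "inj_on fa_prod (lists Z)" and indep: "FA.independent (fa_prod ` lists Z)"
    and span: "FA.span (fa_prod ` lists Z) = invariants d"
    using Z by (simp_all add: free_homog_generators_def)
  let ?W = "weighted_lists Z deg m"
  have hom: "homogeneous (sum_list (map deg zs)) (fa_prod zs)" if "zs \<in> lists Z" for zs
    using homogeneous_fa_prod_map[of zs deg id] that deg by auto
  have "fa_prod ` ?W \<subseteq> inv_component d m"
  proof
    fix p
    assume "p \<in> fa_prod ` ?W"
    then obtain zs where zs: "zs \<in> lists Z" "sum_list (map deg zs) = m" "p = fa_prod zs"
      by (auto simp: weighted_lists_def)
    then have "p \<in> FA.span (fa_prod ` lists Z)"
      by (simp add: FA.span_base)
    then show "p \<in> inv_component d m"
      using span hom[OF zs(1)] zs by (simp add: inv_component_def)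
  qed
  moreover have "inv_component d m \<subseteq> FA.span (fa_prod ` ?W)"
  proof
    fix f :: "nat list \<Rightarrow> 'k"
    assume "f \<in> inv_component d m"
    then have "f \<in> FA.span (fa_prod ` lists Z)" "homogeneous m f"
      using span by (simp_all add: inv_component_def)
    then show "f \<in> FA.span (fa_prod ` ?W)"
      unfolding weighted_lists_def using hom by (rule homogeneous_in_span_same_degree)
  qed
  moreover have "FA.independent (fa_prod ` ?W)"
    using indep by (rule FA.independent_mono) (auto simp: weighted_lists_def)
  ultimately have "card (fa_prod ` ?W) = FA.dim (inv_component d m :: (nat list \<Rightarrow> 'k) set)"
    by (rule FA.basis_card_eq_dim)
  moreover have "inj_on fa_prod ?W"
    using inj by (rule inj_on_subset) (auto simp: weighted_lists_def)
  ultimately show ?thesis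
    using dim_inv_component[OF d, where 'k = 'k] m by (simp add: card_image)
qed

lemma card_free_generators_of_degree:
  fixes Z :: "(nat list \<Rightarrow> 'k::field) set"
  assumes d: "0 < d" and Z: "free_homog_generators d Z" and n: "n \<ge> 1"
  shows "finite {z \<in> Z. homogeneous n z} \<and> card {z \<in> Z. homogeneous n z} = (d - 1) ^ (n - 1)"
proof -
  have "\<forall>z\<in>Z. \<exists>n\<ge>1. homogeneous n z \<and> z \<noteq> (\<lambda>_. 0)"
    using Z by (simp add: free_homog_generators_def)
  then obtain deg where deg: "\<And>z. z \<in> Z \<Longrightarrow> deg z \<ge> 1 \<and> homogeneous (deg z) z \<and> z \<noteq> (\<lambda>_. 0)"
    by metis
  have "{z \<in> Z. homogeneous n z} = weight_class Z deg n"
    using deg homogeneous_unique by (auto simp: weight_class_def)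
  moreover have "finite (weight_class Z deg n) \<and> card (weight_class Z deg n) = (d - 1) ^ (n - 1)"
    using deg card_weighted_lists_free_generators[OF d Z] d n by (intro card_weight_class) auto
  ultimately show ?thesis
    by simp
qed

theorem theorem3p1:
  fixes K :: "'k::field_char_0 itself" and d :: nat
  assumes "d \<ge> 2"
  shows "hilbert_series K d = (1 - of_nat (d - 1) * fps_X) / (1 - of_nat d * fps_X)
         \<and> (\<forall>n\<ge>1. inv_dim K d n = d ^ (n - 1))
         \<and> (\<exists>Z :: (nat list \<Rightarrow> 'k) set. free_homog_generators d Z)
         \<and> (\<forall>Z :: (nat list \<Rightarrow> 'k) set. free_homog_generators d Z \<longrightarrow>
              (\<forall>n\<ge>1. finite {z\<in>Z. homogeneous n z}
                      \<and> card {z\<in>Z. homogeneous n z} = (d - 1) ^ (n - 1)))"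
proof (intro conjI allI impI)
  have d: "0 < d"
    using assms by simp
  show "hilbert_series K d = (1 - of_nat (d - 1) * fps_X) / (1 - of_nat d * fps_X)"
    by (rule hilbert_series_eq[OF d])
  show "inv_dim K d n = d ^ (n - 1)" if "n \<ge> 1" for n
    using inv_dim_eq[OF d, of K n] that by simp
  show "\<exists>Z :: (nat list \<Rightarrow> 'k) set. free_homog_generators d Z"
    using free_homog_generators_orbit_sums[OF d] by blast
  show "finite {z\<in>Z. homogeneous n z}" "card {z\<in>Z. homogeneous n z} = (d - 1) ^ (n - 1)"
    if "free_homog_generators d Z" "n \<ge> 1" for Z :: "(nat list \<Rightarrow> 'k) set" and n
    using card_free_generators_of_degree[OF d that] by simp_all
qed

end
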